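(* Let $R_1,R_2$ be rings, $M$ an $(R_1,R_2)$-bimodule and $P$ an $(R_2,R_1)$-bimodule, and let $R=\begin{pmatrix} R_1 & M\\ P & R_2\end{pmatrix}$ be a trivial Morita context, i.e. the context products $M\times P\to R_1$ and $P\times M\to R_2$ are zero ($MP=0$, $PM=0$), with ring structure given by the usual matrix operations. Then $R$ is NJ-symmetric if and only if $R_1$ and $R_2$ are NJ-symmetric.
   Context: Rings are associative with identity. $N(S)$ is the set of nilpotent elements, $J(S)$ the Jacobson radical of a ring $S$. $S$ is NJ-symmetric if for all $a,b,c\in S$, $abc\in N(S)$ implies $bac\in J(S)$. *)

theory Defs
  imports "HOL-Algebra.Ideal"
begin

definition nilpotents :: "('a, 'b) ring_scheme \<Rightarrow> 'a set" where
  "nilpotents S = {a \<in> carrier S. \<exists>n::nat. a [^]\<^bsub>S\<^esub> n = \<zero>\<^bsub>S\<^esub>}"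

definition left_ideal :: "'a set \<Rightarrow> ('a, 'b) ring_scheme \<Rightarrow> bool" where
  "left_ideal I S \<longleftrightarrow> additive_subgroup I S \<and>
     (\<forall>r \<in> carrier S. \<forall>x \<in> I. r \<otimes>\<^bsub>S\<^esub> x \<in> I)"

definition maximal_left_ideal :: "'a set \<Rightarrow> ('a, 'b) ring_scheme \<Rightarrow> bool" where
  "maximal_left_ideal I S \<longleftrightarrow> left_ideal I S \<and> I \<noteq> carrier S \<and>
     (\<forall>K. left_ideal K S \<and> I \<subseteq> K \<and> K \<noteq> carrier S \<longrightarrow> K = I)"

definition jacobson :: "('a, 'b) ring_scheme \<Rightarrow> 'a set" where
  "jacobson S = carrier S \<inter> \<Inter> {I. maximal_left_ideal I S}"

definition NJ_symmetric :: "('a, 'b) ring_scheme \<Rightarrow> bool" where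
  "NJ_symmetric S \<longleftrightarrow> (\<forall>a \<in> carrier S. \<forall>b \<in> carrier S. \<forall>c \<in> carrier S.
     a \<otimes>\<^bsub>S\<^esub> b \<otimes>\<^bsub>S\<^esub> c \<in> nilpotents S \<longrightarrow> b \<otimes>\<^bsub>S\<^esub> a \<otimes>\<^bsub>S\<^esub> c \<in> jacobson S)"

definition bimodule ::
  "('a, 'c) ring_scheme \<Rightarrow> ('b, 'd) ring_scheme \<Rightarrow> ('m, 'e) ring_scheme \<Rightarrow>
   ('a \<Rightarrow> 'm \<Rightarrow> 'm) \<Rightarrow> ('m \<Rightarrow> 'b \<Rightarrow> 'm) \<Rightarrow> bool" where
  "bimodule R S M l r \<longleftrightarrow> abelian_group M \<and>
    (\<forall>x \<in> carrier R. \<forall>m \<in> carrier M. l x m \<in> carrier M) \<and>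
    (\<forall>m \<in> carrier M. \<forall>y \<in> carrier S. r m y \<in> carrier M) \<and>
    (\<forall>x \<in> carrier R. \<forall>m \<in> carrier M. \<forall>n \<in> carrier M. l x (m \<oplus>\<^bsub>M\<^esub> n) = l x m \<oplus>\<^bsub>M\<^esub> l x n) \<and>
    (\<forall>x \<in> carrier R. \<forall>x' \<in> carrier R. \<forall>m \<in> carrier M. l (x \<oplus>\<^bsub>R\<^esub> x') m = l x m \<oplus>\<^bsub>M\<^esub> l x' m) \<and>
    (\<forall>x \<in> carrier R. \<forall>x' \<in> carrier R. \<forall>m \<in> carrier M. l (x \<otimes>\<^bsub>R\<^esub> x') m = l x (l x' m)) \<and>
    (\<forall>m \<in> carrier M. l \<one>\<^bsub>R\<^esub> m = m) \<and>
    (\<forall>y \<in> carrier S. \<forall>m \<in> carrier M. \<forall>n \<in> carrier M. r (m \<oplus>\<^bsub>M\<^esub> n) y = r m y \<oplus>\<^bsub>M\<^esub> r n y) \<and>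
    (\<forall>y \<in> carrier S. \<forall>y' \<in> carrier S. \<forall>m \<in> carrier M. r m (y \<oplus>\<^bsub>S\<^esub> y') = r m y \<oplus>\<^bsub>M\<^esub> r m y') \<and>
    (\<forall>y \<in> carrier S. \<forall>y' \<in> carrier S. \<forall>m \<in> carrier M. r m (y \<otimes>\<^bsub>S\<^esub> y') = r (r m y) y') \<and>
    (\<forall>m \<in> carrier M. r m \<one>\<^bsub>S\<^esub> = m) \<and>
    (\<forall>x \<in> carrier R. \<forall>y \<in> carrier S. \<forall>m \<in> carrier M. r (l x m) y = l x (r m y))"

text \<open>Trivial Morita context ring [[R1, M], [P, R2]] with MP = 0 and PM = 0.
  Elements (a, m, p, b) represent the matrix [[a, m], [p, b]].\<close>
definition morita_ring ::
  "('a, 'c) ring_scheme \<Rightarrow> ('b, 'd) ring_scheme \<Rightarrow> ('m, 'e) ring_scheme \<Rightarrow> ('p, 'f) ring_scheme \<Rightarrow>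
   ('a \<Rightarrow> 'm \<Rightarrow> 'm) \<Rightarrow> ('m \<Rightarrow> 'b \<Rightarrow> 'm) \<Rightarrow> ('b \<Rightarrow> 'p \<Rightarrow> 'p) \<Rightarrow> ('p \<Rightarrow> 'a \<Rightarrow> 'p) \<Rightarrow>
   ('a \<times> 'm \<times> 'p \<times> 'b) ring" where
  "morita_ring R1 R2 M P lM rM lP rP =
    \<lparr> carrier = {(a, m, p, b). a \<in> carrier R1 \<and> m \<in> carrier M \<and> p \<in> carrier P \<and> b \<in> carrier R2},
      mult = (\<lambda>(a, m, p, b) (a', m', p', b').
               (a \<otimes>\<^bsub>R1\<^esub> a', lM a m' \<oplus>\<^bsub>M\<^esub> rM m b', lP b p' \<oplus>\<^bsub>P\<^esub> rP p a', b \<otimes>\<^bsub>R2\<^esub> b')),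
      one = (\<one>\<^bsub>R1\<^esub>, \<zero>\<^bsub>M\<^esub>, \<zero>\<^bsub>P\<^esub>, \<one>\<^bsub>R2\<^esub>),
      zero = (\<zero>\<^bsub>R1\<^esub>, \<zero>\<^bsub>M\<^esub>, \<zero>\<^bsub>P\<^esub>, \<zero>\<^bsub>R2\<^esub>),
      add = (\<lambda>(a, m, p, b) (a', m', p', b').
               (a \<oplus>\<^bsub>R1\<^esub> a', m \<oplus>\<^bsub>M\<^esub> m', p \<oplus>\<^bsub>P\<^esub> p', b \<oplus>\<^bsub>R2\<^esub> b')) \<rparr>"

end

theory Submission
  imports Defs "HOL-Algebra.RingHom"
begin

text \<open>
  A maximal left ideal L of any ring is prime in the sense that v R u \<subseteq> L forces u \<in> L or
  v \<in> L: otherwise L + R u is the whole ring. In the Morita ring R the off-diagonal part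
  N = [[0, M], [P, 0]] satisfies N R N = 0, so N lies in every maximal left ideal; and since
  e2 R e1 \<subseteq> N for the diagonal idempotents, every maximal left ideal contains e1 or e2,
  hence the kernel of one of the corner projections R \<rightarrow> R1, R \<rightarrow> R2. Maximal left ideals
  then correspond along that projection, so x \<in> J(R) iff its diagonal entries lie in J(R1)
  and J(R2). Likewise x is nilpotent iff both diagonal entries are, because some power of x
  then lies in N and N^2 = 0. With these two descriptions NJ-symmetry of R is checked corner by
  corner, and conversely R1, R2 inherit it as multiplicative retracts of R.
\<close>

lemma left_idealD:
  assumes "left_ideal I S"
  shows "I \<subseteq> carrier S" "\<zero>\<^bsub>S\<^esub> \<in> I"
    and "\<And>x y. x \<in> I \<Longrightarrow> y \<in> I \<Longrightarrow> x \<oplus>\<^bsub>S\<^esub> y \<in> I"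
    and "\<And>r x. r \<in> carrier S \<Longrightarrow> x \<in> I \<Longrightarrow> r \<otimes>\<^bsub>S\<^esub> x \<in> I"
  using assms unfolding left_ideal_def
  by (auto intro: additive_subgroup.a_subset[THEN subsetD] additive_subgroup.zero_closed
        additive_subgroup.a_closed)

lemma maximal_left_ideal_imp_left_ideal: "maximal_left_ideal L S \<Longrightarrow> left_ideal L S"
  by (simp add: maximal_left_ideal_def)

lemma (in ring) left_idealI:
  assumes "I \<subseteq> carrier R" and "\<zero> \<in> I"
    and "\<And>x y. x \<in> I \<Longrightarrow> y \<in> I \<Longrightarrow> x \<oplus> y \<in> I"
    and "\<And>r x. r \<in> carrier R \<Longrightarrow> x \<in> I \<Longrightarrow> r \<otimes> x \<in> I"
  shows "left_ideal I R"
proof -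
  have "\<ominus> x \<in> I" if "x \<in> I" for x
  proof -
    have "\<ominus> x = \<ominus> \<one> \<otimes> x"
      using that assms(1) by (auto simp: l_minus)
    then show ?thesis
      using assms(4) that by simp
  qed
  then have "subgroup I (add_monoid R)"
    using assms by (intro add.subgroupI) (auto simp: a_inv_def)
  then show ?thesis
    unfolding left_ideal_def using assms(4) by (blast intro: additive_subgroupI)
qed

lemma (in ring) left_ideal_eq_carrier:
  assumes "left_ideal L R" and "\<one> \<in> L"
  shows "L = carrier R"
  using left_idealD[OF assms(1)] left_idealD(4)[OF assms(1) _ assms(2)] by force

lemma (in ring) left_ideal_add_principal:
  assumes L: "left_ideal L R" and u: "u \<in> carrier R"
  shows "left_ideal {l \<oplus> r \<otimes> u | l r. l \<in> L \<and> r \<in> carrier R} R"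
    (is "left_ideal ?L' R")
proof (rule left_idealI)
  note LD = left_idealD[OF L]
  show "?L' \<subseteq> carrier R"
    using LD(1) u by auto
  have "\<zero> = \<zero> \<oplus> \<zero> \<otimes> u"
    using u by simp
  then show "\<zero> \<in> ?L'"
    using LD(2) by blast
  show "x \<oplus> y \<in> ?L'" if "x \<in> ?L'" and "y \<in> ?L'" for x y
  proof -
    obtain l r l' r' where xy: "x = l \<oplus> r \<otimes> u" "y = l' \<oplus> r' \<otimes> u"
      and l: "l \<in> L" "l' \<in> L" and r: "r \<in> carrier R" "r' \<in> carrier R"
      using \<open>x \<in> ?L'\<close> \<open>y \<in> ?L'\<close> by blast
    have "l \<in> carrier R" "l' \<in> carrier R"
      using l LD(1) by auto
    then have "x \<oplus> y = (l \<oplus> l') \<oplus> (r \<oplus> r') \<otimes> u"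
      using xy r u by (simp add: l_distr a_ac)
    then show ?thesis
      using LD(3) l r by blast
  qed
  show "s \<otimes> x \<in> ?L'" if s: "s \<in> carrier R" and "x \<in> ?L'" for s x
  proof -
    obtain l r where x: "x = l \<oplus> r \<otimes> u" and l: "l \<in> L" and r: "r \<in> carrier R"
      using \<open>x \<in> ?L'\<close> by blast
    have "l \<in> carrier R"
      using l LD(1) by auto
    then have "s \<otimes> x = s \<otimes> l \<oplus> (s \<otimes> r) \<otimes> u"
      using x r u s by (simp add: r_distr m_assoc)
    then show ?thesis
      using LD(4) s l r by blast
  qed
qed

lemma (in ring) maximal_left_ideal_prime:
  assumes max: "maximal_left_ideal L R" and u: "u \<in> carrier R" and v: "v \<in> carrier R"
    and vRu: "\<And>r. r \<in> carrier R \<Longrightarrow> v \<otimes> r \<otimes> u \<in> L"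
  shows "u \<in> L \<or> v \<in> L"
proof (cases "u \<in> L")
  case False
  let ?L' = "{l \<oplus> r \<otimes> u | l r. l \<in> L \<and> r \<in> carrier R}"
  have L: "left_ideal L R"
    using maximal_left_ideal_imp_left_ideal[OF max] .
  note LD = left_idealD[OF L]
  have "u = \<zero> \<oplus> \<one> \<otimes> u"
    using u by simp
  then have "u \<in> ?L'"
    using LD(2) by blast
  moreover have "l = l \<oplus> \<zero> \<otimes> u" if "l \<in> L" for l
    using that LD(1) u by auto
  then have "L \<subseteq> ?L'"
    by blast
  ultimately have "?L' = carrier R"
    using max left_ideal_add_principal[OF L u] False
    unfolding maximal_left_ideal_def by blast
  then obtain l r where one: "\<one> = l \<oplus> r \<otimes> u" and l: "l \<in> L" and r: "r \<in> carrier R"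
    using one_closed by blast
  have "l \<in> carrier R"
    using l LD(1) by auto
  then have "v = v \<otimes> l \<oplus> v \<otimes> r \<otimes> u"
    using one u v r by (metis r_one r_distr m_assoc m_closed)
  then show ?thesis
    using LD(3,4) l v vRu[OF r] by metis
qed simp

lemma (in ring) nat_pow_eq_zero_mono:
  assumes "x \<in> carrier R" and "x [^] (k::nat) = \<zero>" and "k \<le> n"
  shows "x [^] n = \<zero>"
proof -
  have "x [^] n = x [^] (k + (n - k))"
    using assms(3) by simp
  also have "\<dots> = x [^] k \<otimes> x [^] (n - k)"
    using assms(1) by (simp add: nat_pow_mult)
  also have "\<dots> = \<zero>"
    using assms(1,2) by simp
  finally show ?thesis .
qed

lemma (in ring) zero_nilpotent: "\<zero> \<in> nilpotents R"
  unfolding nilpotents_def by (auto intro: exI[of _ "1::nat"])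

lemma image_eq_if_right_inverse:
  assumes "f ` A \<subseteq> B" and "\<And>b. b \<in> B \<Longrightarrow> g b \<in> A" and "\<And>b. b \<in> B \<Longrightarrow> f (g b) = b"
  shows "f ` A = B"
  using assms by (metis image_eqI subsetI subset_antisym)

lemma image_Int_vimage_eq:
  assumes "f ` A = B" and "K \<subseteq> B"
  shows "f ` (A \<inter> f -` K) = K"
  using assms by blast

context ring_hom_ring
begin

lemma left_ideal_vimage:
  assumes "left_ideal K S"
  shows "left_ideal (carrier R \<inter> h -` K) R"
proof (rule R.left_idealI)
  note KD = left_idealD[OF assms]
  show "carrier R \<inter> h -` K \<subseteq> carrier R" "\<zero> \<in> carrier R \<inter> h -` K"
    using KD(2) by auto
  show "x \<oplus> y \<in> carrier R \<inter> h -` K" if "x \<in> carrier R \<inter> h -` K" "y \<in> carrier R \<inter> h -` K" for x y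
    using that KD(3) by simp
  show "r \<otimes> x \<in> carrier R \<inter> h -` K" if "r \<in> carrier R" "x \<in> carrier R \<inter> h -` K" for r x
    using that KD(4) by simp
qed

lemma left_ideal_image:
  assumes surj: "h ` carrier R = carrier S" and L: "left_ideal L R"
  shows "left_ideal (h ` L) S"
proof (rule S.left_idealI)
  show "h ` L \<subseteq> carrier S"
    using left_idealD(1)[OF L] by auto
  show "\<zero>\<^bsub>S\<^esub> \<in> h ` L"
    using left_idealD(2)[OF L] hom_zero[symmetric] by (rule rev_image_eqI)
next
  fix x y assume "x \<in> h ` L" "y \<in> h ` L"
  then obtain l l' where "x = h l" "y = h l'" and l: "l \<in> L" "l' \<in> L"
    by blast
  moreover from l have "h (l \<oplus> l') = h l \<oplus>\<^bsub>S\<^esub> h l'"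
    using left_idealD(1)[OF L] by (simp add: subsetD)
  ultimately show "x \<oplus>\<^bsub>S\<^esub> y \<in> h ` L"
    using left_idealD(3)[OF L] by (metis rev_image_eqI)
next
  fix r x assume "r \<in> carrier S" "x \<in> h ` L"
  then obtain r' l where "r = h r'" "x = h l" and r': "r' \<in> carrier R" and l: "l \<in> L"
    using surj by blast
  moreover from l r' have "h (r' \<otimes> l) = h r' \<otimes>\<^bsub>S\<^esub> h l"
    using left_idealD(1)[OF L] by (simp add: subsetD)
  ultimately show "r \<otimes>\<^bsub>S\<^esub> x \<in> h ` L"
    using left_idealD(4)[OF L] by (metis rev_image_eqI)
qed

lemma vimage_image_eq:
  assumes L: "left_ideal L R" and ker: "a_kernel R S h \<subseteq> L"
  shows "carrier R \<inter> h -` (h ` L) = L"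
proof
  note LD = left_idealD[OF L]
  show "L \<subseteq> carrier R \<inter> h -` (h ` L)"
    using LD(1) by auto
  show "carrier R \<inter> h -` (h ` L) \<subseteq> L"
  proof
    fix x assume "x \<in> carrier R \<inter> h -` (h ` L)"
    then obtain l where x: "x \<in> carrier R" and l: "l \<in> L" "l \<in> carrier R" and hx: "h x = h l"
      using LD(1) by blast
    have "h (x \<ominus> l) = \<zero>\<^bsub>S\<^esub>"
      using x l hx by (simp add: R.minus_eq S.r_neg)
    then have "x \<ominus> l \<in> L"
      using ker x l unfolding a_kernel_def' by auto
    moreover have "x = (x \<ominus> l) \<oplus> l"
      using x l by (simp add: R.minus_eq R.a_assoc R.l_neg)
    ultimately show "x \<in> L"
      using LD(3) l by metis
  qed
qed

lemma maximal_left_ideal_vimage: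
  assumes surj: "h ` carrier R = carrier S" and max: "maximal_left_ideal K S"
  shows "maximal_left_ideal (carrier R \<inter> h -` K) R"
proof -
  let ?K' = "carrier R \<inter> h -` K"
  have K: "left_ideal K S" "K \<noteq> carrier S"
    using max by (auto simp: maximal_left_ideal_def)
  have K': "left_ideal ?K' R"
    by (rule left_ideal_vimage[OF K(1)])
  have "\<one> \<notin> ?K'"
    using K S.left_ideal_eq_carrier by auto
  then have "?K' \<noteq> carrier R"
    using R.one_closed by blast
  moreover have "L = ?K'" if L: "left_ideal L R" "?K' \<subseteq> L" "L \<noteq> carrier R" for L
  proof -
    have ker: "a_kernel R S h \<subseteq> L"
      using L(2) left_idealD(2)[OF K(1)] unfolding a_kernel_def' by auto
    have "h ` ?K' = K"
      using surj left_idealD(1)[OF K(1)] by (rule image_Int_vimage_eq)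
    then have "K \<subseteq> h ` L"
      using image_mono[OF L(2), of h] by simp
    moreover have "h ` L \<noteq> carrier S"
      using vimage_image_eq[OF L(1) ker] L(3) by auto
    ultimately have "h ` L = K"
      using max left_ideal_image[OF surj L(1)] unfolding maximal_left_ideal_def by blast
    then show ?thesis
      using vimage_image_eq[OF L(1) ker] by simp
  qed
  ultimately show ?thesis
    using K' unfolding maximal_left_ideal_def by blast
qed

lemma maximal_left_ideal_image:
  assumes surj: "h ` carrier R = carrier S" and max: "maximal_left_ideal L R"
    and ker: "a_kernel R S h \<subseteq> L"
  shows "maximal_left_ideal (h ` L) S"
proof -
  have L: "left_ideal L R" "L \<noteq> carrier R"
    using max by (auto simp: maximal_left_ideal_def)
  have "h ` L \<noteq> carrier S"
    using vimage_image_eq[OF L(1) ker] L(2) by auto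
  moreover have "K = h ` L" if K: "left_ideal K S" "h ` L \<subseteq> K" "K \<noteq> carrier S" for K
  proof -
    have "\<one> \<notin> carrier R \<inter> h -` K"
      using K S.left_ideal_eq_carrier by auto
    then have "carrier R \<inter> h -` K \<noteq> carrier R"
      using R.one_closed by blast
    moreover have "L \<subseteq> carrier R \<inter> h -` K"
      using K(2) left_idealD(1)[OF L(1)] by auto
    ultimately have "carrier R \<inter> h -` K = L"
      using max left_ideal_vimage[OF K(1)] unfolding maximal_left_ideal_def by blast
    moreover have "h ` (carrier R \<inter> h -` K) = K"
      using surj left_idealD(1)[OF K(1)] by (rule image_Int_vimage_eq)
    ultimately show ?thesis
      by simp
  qed
  ultimately show ?thesis
    using left_ideal_image[OF surj L(1)] unfolding maximal_left_ideal_def by blast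
qed

lemma jacobson_hom:
  assumes surj: "h ` carrier R = carrier S" and x: "x \<in> jacobson R"
  shows "h x \<in> jacobson S"
  using x maximal_left_ideal_vimage[OF surj] unfolding jacobson_def by auto

lemma vimage_jacobson_subset:
  assumes surj: "h ` carrier R = carrier S" and max: "maximal_left_ideal L R"
    and ker: "a_kernel R S h \<subseteq> L"
  shows "carrier R \<inter> h -` jacobson S \<subseteq> L"
proof -
  have "carrier R \<inter> h -` jacobson S \<subseteq> carrier R \<inter> h -` (h ` L)"
    using maximal_left_ideal_image[OF assms] unfolding jacobson_def by blast
  also have "\<dots> = L"
    using vimage_image_eq[OF _ ker] max by (simp add: maximal_left_ideal_def)
  finally show ?thesis .
qed

lemma nilpotents_hom:
  assumes "x \<in> nilpotents R"
  shows "h x \<in> nilpotents S"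
  using assms hom_nat_pow by (auto simp: nilpotents_def) (metis hom_zero)

lemma NJ_symmetric_retract:
  assumes NJ: "NJ_symmetric R"
    and g: "\<And>s. s \<in> carrier S \<Longrightarrow> g s \<in> carrier R" "\<And>s. s \<in> carrier S \<Longrightarrow> h (g s) = s"
    and g_mult: "\<And>s t. s \<in> carrier S \<Longrightarrow> t \<in> carrier S \<Longrightarrow> g (s \<otimes>\<^bsub>S\<^esub> t) = g s \<otimes> g t"
    and g_nil: "\<And>s. s \<in> nilpotents S \<Longrightarrow> g s \<in> nilpotents R"
  shows "NJ_symmetric S"
  unfolding NJ_symmetric_def
proof (intro ballI impI)
  fix a b c assume abc: "a \<in> carrier S" "b \<in> carrier S" "c \<in> carrier S"
    and "a \<otimes>\<^bsub>S\<^esub> b \<otimes>\<^bsub>S\<^esub> c \<in> nilpotents S"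
  then have "g a \<otimes> g b \<otimes> g c \<in> nilpotents R"
    using g_nil g_mult by (metis S.m_closed)
  then have "g b \<otimes> g a \<otimes> g c \<in> jacobson R"
    using NJ abc g unfolding NJ_symmetric_def by blast
  moreover have "h ` carrier R = carrier S"
    using g by (intro image_eq_if_right_inverse[where g = g]) auto
  ultimately have "h (g b \<otimes> g a \<otimes> g c) \<in> jacobson S"
    using jacobson_hom by blast
  then show "b \<otimes>\<^bsub>S\<^esub> a \<otimes>\<^bsub>S\<^esub> c \<in> jacobson S"
    using abc g by simp
qed

end

locale is_bimodule = R: ring R + S: ring S
  for R :: "('a, 'c) ring_scheme" and S :: "('b, 'd) ring_scheme" +
  fixes M :: "('m, 'e) ring_scheme" and l :: "'a \<Rightarrow> 'm \<Rightarrow> 'm" and r :: "'m \<Rightarrow> 'b \<Rightarrow> 'm"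
  assumes bimodule: "bimodule R S M l r"
begin

sublocale abelian_group M
  using bimodule by (simp add: bimodule_def)

lemma
  shows left_closed [simp]: "x \<in> carrier R \<Longrightarrow> m \<in> carrier M \<Longrightarrow> l x m \<in> carrier M"
    and right_closed [simp]: "m \<in> carrier M \<Longrightarrow> y \<in> carrier S \<Longrightarrow> r m y \<in> carrier M"
    and left_l_distr: "x \<in> carrier R \<Longrightarrow> x' \<in> carrier R \<Longrightarrow> m \<in> carrier M \<Longrightarrow>
      l (x \<oplus>\<^bsub>R\<^esub> x') m = l x m \<oplus>\<^bsub>M\<^esub> l x' m"
    and left_r_distr: "x \<in> carrier R \<Longrightarrow> m \<in> carrier M \<Longrightarrow> n \<in> carrier M \<Longrightarrow>
      l x (m \<oplus>\<^bsub>M\<^esub> n) = l x m \<oplus>\<^bsub>M\<^esub> l x n"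
    and left_assoc: "x \<in> carrier R \<Longrightarrow> x' \<in> carrier R \<Longrightarrow> m \<in> carrier M \<Longrightarrow>
      l (x \<otimes>\<^bsub>R\<^esub> x') m = l x (l x' m)"
    and left_one [simp]: "m \<in> carrier M \<Longrightarrow> l \<one>\<^bsub>R\<^esub> m = m"
    and right_l_distr: "m \<in> carrier M \<Longrightarrow> n \<in> carrier M \<Longrightarrow> y \<in> carrier S \<Longrightarrow>
      r (m \<oplus>\<^bsub>M\<^esub> n) y = r m y \<oplus>\<^bsub>M\<^esub> r n y"
    and right_r_distr: "m \<in> carrier M \<Longrightarrow> y \<in> carrier S \<Longrightarrow> y' \<in> carrier S \<Longrightarrow>
      r m (y \<oplus>\<^bsub>S\<^esub> y') = r m y \<oplus>\<^bsub>M\<^esub> r m y'"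
    and right_assoc: "m \<in> carrier M \<Longrightarrow> y \<in> carrier S \<Longrightarrow> y' \<in> carrier S \<Longrightarrow>
      r m (y \<otimes>\<^bsub>S\<^esub> y') = r (r m y) y'"
    and right_one [simp]: "m \<in> carrier M \<Longrightarrow> r m \<one>\<^bsub>S\<^esub> = m"
    and left_right_assoc: "x \<in> carrier R \<Longrightarrow> m \<in> carrier M \<Longrightarrow> y \<in> carrier S \<Longrightarrow>
      r (l x m) y = l x (r m y)"
  using bimodule by (simp_all add: bimodule_def)

lemma
  shows left_l_null [simp]: "m \<in> carrier M \<Longrightarrow> l \<zero>\<^bsub>R\<^esub> m = \<zero>\<^bsub>M\<^esub>"
    and left_r_null [simp]: "x \<in> carrier R \<Longrightarrow> l x \<zero>\<^bsub>M\<^esub> = \<zero>\<^bsub>M\<^esub>"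
    and right_l_null [simp]: "y \<in> carrier S \<Longrightarrow> r \<zero>\<^bsub>M\<^esub> y = \<zero>\<^bsub>M\<^esub>"
    and right_r_null [simp]: "m \<in> carrier M \<Longrightarrow> r m \<zero>\<^bsub>S\<^esub> = \<zero>\<^bsub>M\<^esub>"
  using left_l_distr[of "\<zero>\<^bsub>R\<^esub>" "\<zero>\<^bsub>R\<^esub>" m] left_r_distr[of x "\<zero>\<^bsub>M\<^esub>" "\<zero>\<^bsub>M\<^esub>"]
    right_l_distr[of "\<zero>\<^bsub>M\<^esub>" "\<zero>\<^bsub>M\<^esub>" y] right_r_distr[of m "\<zero>\<^bsub>S\<^esub>" "\<zero>\<^bsub>S\<^esub>"]
  by simp_all

end

locale morita_context =
  R1: ring R1 + R2: ring R2 + M: is_bimodule R1 R2 M lM rM + P: is_bimodule R2 R1 P lP rP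
  for R1 :: "('a, 'c) ring_scheme" and R2 :: "('b, 'd) ring_scheme"
    and M :: "('m, 'e) ring_scheme" and P :: "('p, 'f) ring_scheme"
    and lM :: "'a \<Rightarrow> 'm \<Rightarrow> 'm" and rM :: "'m \<Rightarrow> 'b \<Rightarrow> 'm"
    and lP :: "'b \<Rightarrow> 'p \<Rightarrow> 'p" and rP :: "'p \<Rightarrow> 'a \<Rightarrow> 'p"
begin

abbreviation R :: "('a \<times> 'm \<times> 'p \<times> 'b) ring"
  where "R \<equiv> morita_ring R1 R2 M P lM rM lP rP"

abbreviation upper_left :: "'a \<times> 'm \<times> 'p \<times> 'b \<Rightarrow> 'a"
  where "upper_left x \<equiv> fst x"

abbreviation lower_right :: "'a \<times> 'm \<times> 'p \<times> 'b \<Rightarrow> 'b"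
  where "lower_right x \<equiv> snd (snd (snd x))"

lemma morita_simps [simp]:
  shows "(a, m, p, b) \<in> carrier R \<longleftrightarrow>
      a \<in> carrier R1 \<and> m \<in> carrier M \<and> p \<in> carrier P \<and> b \<in> carrier R2"
    and "(a, m, p, b) \<otimes>\<^bsub>R\<^esub> (a', m', p', b') =
      (a \<otimes>\<^bsub>R1\<^esub> a', lM a m' \<oplus>\<^bsub>M\<^esub> rM m b', lP b p' \<oplus>\<^bsub>P\<^esub> rP p a', b \<otimes>\<^bsub>R2\<^esub> b')"
    and "(a, m, p, b) \<oplus>\<^bsub>R\<^esub> (a', m', p', b') =
      (a \<oplus>\<^bsub>R1\<^esub> a', m \<oplus>\<^bsub>M\<^esub> m', p \<oplus>\<^bsub>P\<^esub> p', b \<oplus>\<^bsub>R2\<^esub> b')"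
    and "\<one>\<^bsub>R\<^esub> = (\<one>\<^bsub>R1\<^esub>, \<zero>\<^bsub>M\<^esub>, \<zero>\<^bsub>P\<^esub>, \<one>\<^bsub>R2\<^esub>)"
    and "\<zero>\<^bsub>R\<^esub> = (\<zero>\<^bsub>R1\<^esub>, \<zero>\<^bsub>M\<^esub>, \<zero>\<^bsub>P\<^esub>, \<zero>\<^bsub>R2\<^esub>)"
  by (simp_all add: morita_ring_def)

lemma morita_abelian_group: "abelian_group R"
proof (rule abelian_groupI)
  fix x y assume "x \<in> carrier R" "y \<in> carrier R"
  then show "x \<oplus>\<^bsub>R\<^esub> y \<in> carrier R"
    by (cases x, cases y) auto
next
  fix x y z assume "x \<in> carrier R" "y \<in> carrier R" "z \<in> carrier R"
  then show "x \<oplus>\<^bsub>R\<^esub> y \<oplus>\<^bsub>R\<^esub> z = x \<oplus>\<^bsub>R\<^esub> (y \<oplus>\<^bsub>R\<^esub> z)"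
    by (cases x, cases y, cases z) (auto simp: R1.a_assoc R2.a_assoc M.a_assoc P.a_assoc)
next
  fix x y assume "x \<in> carrier R" "y \<in> carrier R"
  then show "x \<oplus>\<^bsub>R\<^esub> y = y \<oplus>\<^bsub>R\<^esub> x"
    by (cases x, cases y) (auto simp: R1.a_comm R2.a_comm M.a_comm P.a_comm)
next
  fix x assume "x \<in> carrier R"
  then show "\<zero>\<^bsub>R\<^esub> \<oplus>\<^bsub>R\<^esub> x = x"
    by (cases x) auto
next
  fix x assume "x \<in> carrier R"
  then obtain a m p b where "x = (a, m, p, b)"
    and "a \<in> carrier R1" "m \<in> carrier M" "p \<in> carrier P" "b \<in> carrier R2"
    by (cases x) auto
  then show "\<exists>y\<in>carrier R. y \<oplus>\<^bsub>R\<^esub> x = \<zero>\<^bsub>R\<^esub>"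
    by (intro bexI[of _ "(\<ominus>\<^bsub>R1\<^esub> a, \<ominus>\<^bsub>M\<^esub> m, \<ominus>\<^bsub>P\<^esub> p, \<ominus>\<^bsub>R2\<^esub> b)"])
      (auto simp: R1.l_neg R2.l_neg M.l_neg P.l_neg)
qed simp

lemma morita_monoid: "monoid R"
proof (rule monoidI)
  fix x y assume "x \<in> carrier R" "y \<in> carrier R"
  then show "x \<otimes>\<^bsub>R\<^esub> y \<in> carrier R"
    by (cases x, cases y) auto
next
  fix x y z assume "x \<in> carrier R" "y \<in> carrier R" "z \<in> carrier R"
  then show "x \<otimes>\<^bsub>R\<^esub> y \<otimes>\<^bsub>R\<^esub> z = x \<otimes>\<^bsub>R\<^esub> (y \<otimes>\<^bsub>R\<^esub> z)"
    by (cases x, cases y, cases z)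
      (auto simp: R1.m_assoc R2.m_assoc M.a_assoc P.a_assoc M.left_r_distr P.left_r_distr
        M.right_l_distr P.right_l_distr M.left_assoc P.left_assoc M.right_assoc P.right_assoc
        M.left_right_assoc P.left_right_assoc)
qed auto

lemma morita_ring: "ring R"
proof (rule ringI[OF morita_abelian_group morita_monoid])
  fix x y z assume "x \<in> carrier R" "y \<in> carrier R" "z \<in> carrier R"
  then show "(x \<oplus>\<^bsub>R\<^esub> y) \<otimes>\<^bsub>R\<^esub> z = x \<otimes>\<^bsub>R\<^esub> z \<oplus>\<^bsub>R\<^esub> y \<otimes>\<^bsub>R\<^esub> z"
    and "z \<otimes>\<^bsub>R\<^esub> (x \<oplus>\<^bsub>R\<^esub> y) = z \<otimes>\<^bsub>R\<^esub> x \<oplus>\<^bsub>R\<^esub> z \<otimes>\<^bsub>R\<^esub> y"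
    by (cases x, cases y, cases z; auto simp: R1.l_distr R2.l_distr R1.r_distr R2.r_distr
          M.a_ac P.a_ac M.left_l_distr P.left_l_distr M.left_r_distr P.left_r_distr
          M.right_l_distr P.right_l_distr M.right_r_distr P.right_r_distr)+
qed

sublocale R: ring R
  by (rule morita_ring)

sublocale UL: ring_hom_ring R R1 upper_left
  by (rule ring_hom_ringI[OF morita_ring R1.ring_axioms]) auto

sublocale LR: ring_hom_ring R R2 lower_right
  by (rule ring_hom_ringI[OF morita_ring R2.ring_axioms]) auto

lemma upper_left_surj: "upper_left ` carrier R = carrier R1"
  by (rule image_eq_if_right_inverse[where g = "\<lambda>a. (a, \<zero>\<^bsub>M\<^esub>, \<zero>\<^bsub>P\<^esub>, \<zero>\<^bsub>R2\<^esub>)"]) auto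

lemma lower_right_surj: "lower_right ` carrier R = carrier R2"
  by (rule image_eq_if_right_inverse[where g = "\<lambda>b. (\<zero>\<^bsub>R1\<^esub>, \<zero>\<^bsub>M\<^esub>, \<zero>\<^bsub>P\<^esub>, b)"]) auto

lemma off_diagonal_annihilate:
  assumes "m \<in> carrier M" "p \<in> carrier P" "m' \<in> carrier M" "p' \<in> carrier P" "r \<in> carrier R"
  shows "(\<zero>\<^bsub>R1\<^esub>, m, p, \<zero>\<^bsub>R2\<^esub>) \<otimes>\<^bsub>R\<^esub> r \<otimes>\<^bsub>R\<^esub> (\<zero>\<^bsub>R1\<^esub>, m', p', \<zero>\<^bsub>R2\<^esub>) = \<zero>\<^bsub>R\<^esub>"
  using assms by (cases r) simp

lemma off_diagonal_mem_maximal_left_ideal: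
  assumes max: "maximal_left_ideal L R" and "m \<in> carrier M" "p \<in> carrier P"
  shows "(\<zero>\<^bsub>R1\<^esub>, m, p, \<zero>\<^bsub>R2\<^esub>) \<in> L"
proof -
  let ?n = "(\<zero>\<^bsub>R1\<^esub>, m, p, \<zero>\<^bsub>R2\<^esub>)"
  have n: "?n \<in> carrier R"
    using assms by simp
  have "\<zero>\<^bsub>R\<^esub> \<in> L"
    using left_idealD(2)[OF maximal_left_ideal_imp_left_ideal[OF max]] .
  then have "?n \<otimes>\<^bsub>R\<^esub> r \<otimes>\<^bsub>R\<^esub> ?n \<in> L" if "r \<in> carrier R" for r
    using off_diagonal_annihilate[OF assms(2,3) assms(2,3) that] by simp
  then show ?thesis
    using R.maximal_left_ideal_prime[OF max n n] by blast
qed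

lemma a_kernel_lower_right_subset:
  assumes max: "maximal_left_ideal L R" and e1: "(\<one>\<^bsub>R1\<^esub>, \<zero>\<^bsub>M\<^esub>, \<zero>\<^bsub>P\<^esub>, \<zero>\<^bsub>R2\<^esub>) \<in> L"
  shows "a_kernel R R2 lower_right \<subseteq> L"
proof
  fix x assume "x \<in> a_kernel R R2 lower_right"
  then have "x \<in> carrier R" "lower_right x = \<zero>\<^bsub>R2\<^esub>"
    unfolding a_kernel_def' by simp_all
  then obtain a m p where "x = (a, m, p, \<zero>\<^bsub>R2\<^esub>)"
    and "a \<in> carrier R1" "m \<in> carrier M" "p \<in> carrier P"
    by (cases x) simp
  then have decomp: "x = (\<zero>\<^bsub>R1\<^esub>, m, p, \<zero>\<^bsub>R2\<^esub>) \<oplus>\<^bsub>R\<^esub>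
      (a, \<zero>\<^bsub>M\<^esub>, \<zero>\<^bsub>P\<^esub>, \<zero>\<^bsub>R2\<^esub>) \<otimes>\<^bsub>R\<^esub> (\<one>\<^bsub>R1\<^esub>, \<zero>\<^bsub>M\<^esub>, \<zero>\<^bsub>P\<^esub>, \<zero>\<^bsub>R2\<^esub>)"
    and "(a, \<zero>\<^bsub>M\<^esub>, \<zero>\<^bsub>P\<^esub>, \<zero>\<^bsub>R2\<^esub>) \<in> carrier R"
    by simp_all
  then show "x \<in> L"
    using left_idealD(3,4)[OF maximal_left_ideal_imp_left_ideal[OF max]] e1
      off_diagonal_mem_maximal_left_ideal[OF max \<open>m \<in> carrier M\<close> \<open>p \<in> carrier P\<close>]
    unfolding decomp by blast
qed

lemma a_kernel_upper_left_subset: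
  assumes max: "maximal_left_ideal L R" and e2: "(\<zero>\<^bsub>R1\<^esub>, \<zero>\<^bsub>M\<^esub>, \<zero>\<^bsub>P\<^esub>, \<one>\<^bsub>R2\<^esub>) \<in> L"
  shows "a_kernel R R1 upper_left \<subseteq> L"
proof
  fix x assume "x \<in> a_kernel R R1 upper_left"
  then have "x \<in> carrier R" "upper_left x = \<zero>\<^bsub>R1\<^esub>"
    unfolding a_kernel_def' by simp_all
  then obtain m p b where "x = (\<zero>\<^bsub>R1\<^esub>, m, p, b)"
    and "m \<in> carrier M" "p \<in> carrier P" "b \<in> carrier R2"
    by (cases x) simp
  then have decomp: "x = (\<zero>\<^bsub>R1\<^esub>, m, p, \<zero>\<^bsub>R2\<^esub>) \<oplus>\<^bsub>R\<^esub>
      (\<zero>\<^bsub>R1\<^esub>, \<zero>\<^bsub>M\<^esub>, \<zero>\<^bsub>P\<^esub>, b) \<otimes>\<^bsub>R\<^esub> (\<zero>\<^bsub>R1\<^esub>, \<zero>\<^bsub>M\<^esub>, \<zero>\<^bsub>P\<^esub>, \<one>\<^bsub>R2\<^esub>)"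
    and "(\<zero>\<^bsub>R1\<^esub>, \<zero>\<^bsub>M\<^esub>, \<zero>\<^bsub>P\<^esub>, b) \<in> carrier R"
    by simp_all
  then show "x \<in> L"
    using left_idealD(3,4)[OF maximal_left_ideal_imp_left_ideal[OF max]] e2
      off_diagonal_mem_maximal_left_ideal[OF max \<open>m \<in> carrier M\<close> \<open>p \<in> carrier P\<close>]
    unfolding decomp by blast
qed

lemma maximal_left_ideal_kernel_cases:
  assumes max: "maximal_left_ideal L R"
  shows "a_kernel R R1 upper_left \<subseteq> L \<or> a_kernel R R2 lower_right \<subseteq> L"
proof -
  let ?e1 = "(\<one>\<^bsub>R1\<^esub>, \<zero>\<^bsub>M\<^esub>, \<zero>\<^bsub>P\<^esub>, \<zero>\<^bsub>R2\<^esub>)"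
    and ?e2 = "(\<zero>\<^bsub>R1\<^esub>, \<zero>\<^bsub>M\<^esub>, \<zero>\<^bsub>P\<^esub>, \<one>\<^bsub>R2\<^esub>)"
  have e2Re1: "?e2 \<otimes>\<^bsub>R\<^esub> r \<otimes>\<^bsub>R\<^esub> ?e1 \<in> L" if r: "r \<in> carrier R" for r
  proof -
    obtain a m p b where "r = (a, m, p, b)"
      and "a \<in> carrier R1" "m \<in> carrier M" "p \<in> carrier P" "b \<in> carrier R2"
      using r by (cases r) auto
    then have "?e2 \<otimes>\<^bsub>R\<^esub> r \<otimes>\<^bsub>R\<^esub> ?e1 = (\<zero>\<^bsub>R1\<^esub>, \<zero>\<^bsub>M\<^esub>, p, \<zero>\<^bsub>R2\<^esub>)"
      by simp
    then show ?thesis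
      using off_diagonal_mem_maximal_left_ideal[OF max M.zero_closed \<open>p \<in> carrier P\<close>] by simp
  qed
  have "?e1 \<in> L \<or> ?e2 \<in> L"
    by (rule R.maximal_left_ideal_prime[OF max _ _ e2Re1]) simp_all
  then show ?thesis
    using a_kernel_lower_right_subset[OF max] a_kernel_upper_left_subset[OF max] by blast
qed

lemma jacobson_morita_iff:
  "x \<in> jacobson R \<longleftrightarrow>
     x \<in> carrier R \<and> upper_left x \<in> jacobson R1 \<and> lower_right x \<in> jacobson R2"
proof
  assume "x \<in> jacobson R"
  then show "x \<in> carrier R \<and> upper_left x \<in> jacobson R1 \<and> lower_right x \<in> jacobson R2"
    using UL.jacobson_hom[OF upper_left_surj] LR.jacobson_hom[OF lower_right_surj]
    by (simp add: jacobson_def)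
next
  assume x: "x \<in> carrier R \<and> upper_left x \<in> jacobson R1 \<and> lower_right x \<in> jacobson R2"
  have "x \<in> L" if max: "maximal_left_ideal L R" for L
    using maximal_left_ideal_kernel_cases[OF max] x
      UL.vimage_jacobson_subset[OF upper_left_surj max] LR.vimage_jacobson_subset[OF lower_right_surj max]
    by blast
  then show "x \<in> jacobson R"
    using x by (simp add: jacobson_def)
qed

lemma nilpotents_morita_iff:
  "x \<in> nilpotents R \<longleftrightarrow>
     x \<in> carrier R \<and> upper_left x \<in> nilpotents R1 \<and> lower_right x \<in> nilpotents R2"
proof
  assume "x \<in> nilpotents R"
  then show "x \<in> carrier R \<and> upper_left x \<in> nilpotents R1 \<and> lower_right x \<in> nilpotents R2"
    using UL.nilpotents_hom LR.nilpotents_hom by (simp add: nilpotents_def)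
next
  assume "x \<in> carrier R \<and> upper_left x \<in> nilpotents R1 \<and> lower_right x \<in> nilpotents R2"
  then obtain k j :: nat where x: "x \<in> carrier R"
    and k: "upper_left x [^]\<^bsub>R1\<^esub> k = \<zero>\<^bsub>R1\<^esub>" and j: "lower_right x [^]\<^bsub>R2\<^esub> j = \<zero>\<^bsub>R2\<^esub>"
    by (auto simp: nilpotents_def)
  let ?y = "x [^]\<^bsub>R\<^esub> (k + j)"
  have "upper_left ?y = \<zero>\<^bsub>R1\<^esub>" "lower_right ?y = \<zero>\<^bsub>R2\<^esub>"
    using x R1.nat_pow_eq_zero_mono[OF _ k] R2.nat_pow_eq_zero_mono[OF _ j]
    by (simp_all add: UL.hom_nat_pow LR.hom_nat_pow)
  moreover have "?y \<in> carrier R"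
    using x by simp
  ultimately obtain m p where y: "?y = (\<zero>\<^bsub>R1\<^esub>, m, p, \<zero>\<^bsub>R2\<^esub>)" "m \<in> carrier M" "p \<in> carrier P"
    by (cases ?y) auto
  have "x [^]\<^bsub>R\<^esub> (k + j + (k + j)) = ?y \<otimes>\<^bsub>R\<^esub> \<one>\<^bsub>R\<^esub> \<otimes>\<^bsub>R\<^esub> ?y"
    using x by (simp only: R.nat_pow_closed R.r_one R.nat_pow_mult)
  also have "\<dots> = \<zero>\<^bsub>R\<^esub>"
    using off_diagonal_annihilate[OF y(2,3) y(2,3) R.one_closed] y(1) by simp
  finally show "x \<in> nilpotents R"
    using x unfolding nilpotents_def by blast
qed

lemma NJ_symmetric_upper_left:
  assumes "NJ_symmetric R"
  shows "NJ_symmetric R1"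
proof (rule UL.NJ_symmetric_retract[OF assms, where g = "\<lambda>a. (a, \<zero>\<^bsub>M\<^esub>, \<zero>\<^bsub>P\<^esub>, \<zero>\<^bsub>R2\<^esub>)"])
  fix a assume "a \<in> nilpotents R1"
  moreover from this have "a \<in> carrier R1"
    by (simp add: nilpotents_def)
  ultimately show "(a, \<zero>\<^bsub>M\<^esub>, \<zero>\<^bsub>P\<^esub>, \<zero>\<^bsub>R2\<^esub>) \<in> nilpotents R"
    by (simp add: nilpotents_morita_iff R2.zero_nilpotent)
qed simp_all

lemma NJ_symmetric_lower_right:
  assumes "NJ_symmetric R"
  shows "NJ_symmetric R2"
proof (rule LR.NJ_symmetric_retract[OF assms, where g = "\<lambda>b. (\<zero>\<^bsub>R1\<^esub>, \<zero>\<^bsub>M\<^esub>, \<zero>\<^bsub>P\<^esub>, b)"])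
  fix b assume "b \<in> nilpotents R2"
  moreover from this have "b \<in> carrier R2"
    by (simp add: nilpotents_def)
  ultimately show "(\<zero>\<^bsub>R1\<^esub>, \<zero>\<^bsub>M\<^esub>, \<zero>\<^bsub>P\<^esub>, b) \<in> nilpotents R"
    by (simp add: nilpotents_morita_iff R1.zero_nilpotent)
qed simp_all

lemma NJ_symmetric_morita:
  assumes NJ1: "NJ_symmetric R1" and NJ2: "NJ_symmetric R2"
  shows "NJ_symmetric R"
  unfolding NJ_symmetric_def
proof (intro ballI impI)
  fix x y z assume xyz: "x \<in> carrier R" "y \<in> carrier R" "z \<in> carrier R"
    and "x \<otimes>\<^bsub>R\<^esub> y \<otimes>\<^bsub>R\<^esub> z \<in> nilpotents R"
  then have "upper_left x \<otimes>\<^bsub>R1\<^esub> upper_left y \<otimes>\<^bsub>R1\<^esub> upper_left z \<in> nilpotents R1"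
    and "lower_right x \<otimes>\<^bsub>R2\<^esub> lower_right y \<otimes>\<^bsub>R2\<^esub> lower_right z \<in> nilpotents R2"
    by (simp_all add: nilpotents_morita_iff)
  then have "upper_left y \<otimes>\<^bsub>R1\<^esub> upper_left x \<otimes>\<^bsub>R1\<^esub> upper_left z \<in> jacobson R1"
    and "lower_right y \<otimes>\<^bsub>R2\<^esub> lower_right x \<otimes>\<^bsub>R2\<^esub> lower_right z \<in> jacobson R2"
    using NJ1 NJ2 xyz unfolding NJ_symmetric_def by simp_all
  then show "y \<otimes>\<^bsub>R\<^esub> x \<otimes>\<^bsub>R\<^esub> z \<in> jacobson R"
    using xyz by (simp add: jacobson_morita_iff)
qed

end

theorem proposition2p21:
  fixes R1 :: "('a, 'c) ring_scheme" and R2 :: "('b, 'd) ring_scheme"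
    and M :: "('m, 'e) ring_scheme" and P :: "('p, 'f) ring_scheme"
    and lM :: "'a \<Rightarrow> 'm \<Rightarrow> 'm" and rM :: "'m \<Rightarrow> 'b \<Rightarrow> 'm"
    and lP :: "'b \<Rightarrow> 'p \<Rightarrow> 'p" and rP :: "'p \<Rightarrow> 'a \<Rightarrow> 'p"
  assumes "ring R1" and "ring R2"
    and "bimodule R1 R2 M lM rM"
    and "bimodule R2 R1 P lP rP"
  shows "NJ_symmetric (morita_ring R1 R2 M P lM rM lP rP) \<longleftrightarrow>
         NJ_symmetric R1 \<and> NJ_symmetric R2"
proof -
  interpret morita_context R1 R2 M P lM rM lP rP
    using assms by (simp add: morita_context_def is_bimodule_def is_bimodule_axioms_def)
  show ?thesis
    using NJ_symmetric_upper_left NJ_symmetric_lower_right NJ_symmetric_morita by blast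
qed

end
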